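(* Let $p$ be an odd prime. If $M$ is a locally finitely generated $A$-module and $x\in M$ satisfies $\Phi_nx=0$ for some $n\ge0$, then $A_nx=0$.
   Context: $A$ is the ring of degree zero stable operations in $p$-local complex $K$-theory. Fix $q$ primitive mod $p^2$, $\Psi^q\in A$ the Adams operation, $q_i=q^{(-1)^i\lfloor i/2\rfloor}$, $\Theta_n(X)=\prod_{i=1}^n(X-q_i)$, $\Phi_n=\Theta_n(\Psi^q)$; every element of $A$ is uniquely a convergent sum $\sum_{n\ge0}a_n\Phi_n$ with $a_n\in\mathbb{Z}_{(p)}$, and $A_m=\{\sum_{n\ge m}a_n\Phi_n\}$. An $A$-module $M$ is locally finitely generated if $Ax$ is finitely generated over $\mathbb{Z}_{(p)}$ for every $x\in M$. *)

theory Defs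
  imports "HOL-Algebra.Algebra" "HOL-Computational_Algebra.Polynomial"
    "HOL-Number_Theory.Number_Theory"
begin

definition Zp :: "nat \<Rightarrow> rat set" where
  "Zp p = {r. \<not> int p dvd snd (quotient_of r)}"

definition qi :: "nat \<Rightarrow> nat \<Rightarrow> rat" where
  "qi q i = (of_nat q :: rat) powi ((-1) ^ i * int (i div 2))"

definition Theta :: "nat \<Rightarrow> nat \<Rightarrow> rat poly" where
  "Theta q n = (\<Prod>i\<in>{1..n}. [:- qi q i, 1:])"

text \<open>An element of A is represented by its coefficient sequence (a_n) in the
  expansion sum_n a_n Phi_n.  Concretely A is the inverse limit of the rings
  Z_(p)[X]/(Theta_n(X)), X corresponding to Psi^q.  The truncation
  sum_{k<n} a_k Theta_k is the image in Z_(p)[X]/(Theta_n).\<close>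
definition Atrunc :: "nat \<Rightarrow> (nat \<Rightarrow> rat) \<Rightarrow> nat \<Rightarrow> rat poly" where
  "Atrunc q a n = (\<Sum>k<n. smult (a k) (Theta q k))"

text \<open>Product: the coefficient of Theta_k in a polynomial of degree at most k
  written in the Theta basis is its coefficient of X^k (Theta_k is monic).\<close>
definition Amult :: "nat \<Rightarrow> (nat \<Rightarrow> rat) \<Rightarrow> (nat \<Rightarrow> rat) \<Rightarrow> nat \<Rightarrow> rat" where
  "Amult q a b k = coeff ((Atrunc q a (Suc k) * Atrunc q b (Suc k)) mod Theta q (Suc k)) k"

definition Aring :: "nat \<Rightarrow> nat \<Rightarrow> (nat \<Rightarrow> rat) ring" where
  "Aring p q = \<lparr> carrier = {a. \<forall>n. a n \<in> Zp p},
               monoid.mult = Amult q,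
               monoid.one = (\<lambda>n. if n = 0 then 1 else 0),
               ring.zero = (\<lambda>n. 0),
               ring.add = (\<lambda>a b n. a n + b n) \<rparr>"

text \<open>Phi_n = Theta_n(Psi^q), and the constant element c (i.e. c * Phi_0).\<close>
definition Phi :: "nat \<Rightarrow> nat \<Rightarrow> rat" where
  "Phi n = (\<lambda>k. if k = n then 1 else 0)"

definition Aconst :: "rat \<Rightarrow> nat \<Rightarrow> rat" where
  "Aconst c = (\<lambda>k. if k = 0 then c else 0)"

definition Afilt :: "nat \<Rightarrow> nat \<Rightarrow> (nat \<Rightarrow> rat) set" where
  "Afilt p m = {a. (\<forall>n. a n \<in> Zp p) \<and> (\<forall>n<m. a n = 0)}"

definition locally_fg ::
  "nat \<Rightarrow> (nat \<Rightarrow> rat, 'b) module \<Rightarrow> bool" where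
  "locally_fg p M \<longleftrightarrow> (\<forall>x\<in>carrier M. \<exists>S. finite S \<and> S \<subseteq> carrier M \<and>
     {a \<odot>\<^bsub>M\<^esub> x | a. a \<in> {a. \<forall>n. a n \<in> Zp p}} =
     {finsum M (\<lambda>s. Aconst (c s) \<odot>\<^bsub>M\<^esub> s) S | c. \<forall>s\<in>S. c s \<in> Zp p})"

end

theory Submission
  imports Defs
begin

text \<open>Let a = sum_{m >= n} a_m Phi_m be in A_n. Formally a = Phi_n * sum_{m >= n} a_m Theta_{n,m}(Psi^q)
  with Theta_{n,m} = prod_{n < i <= m} (X - q_i). The second factor does not converge in A, but it
  does modulo p: by Fermat, q_i is periodic modulo p with period 2(p-1), so Theta_{n,m} contains a
  factor congruent to Theta_J modulo p as soon as m >= 2(p-1)n + J. Hence A_n = Phi_n A + p A_n.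
  If Phi_n x = 0 this gives A_n x = p A_n x, so every a x lies in the intersection of the
  p^k (A x). As A x is a finitely generated Z_(p)-module, Krull's intersection theorem (proved
  here by induction on the number of generators) shows that this intersection is zero.\<close>

section \<open>The p-local integers\<close>

lemma Zp_iff:
  assumes "Factorial_Ring.prime p"
  shows "r \<in> Zp p \<longleftrightarrow> (\<exists>a b. b \<noteq> 0 \<and> \<not> int p dvd b \<and> r = of_int a / of_int b)"
proof
  assume "r \<in> Zp p"
  obtain a b where q: "quotient_of r = (a, b)" by (cases "quotient_of r")
  then have "b > 0" "r = of_int a / of_int b" "\<not> int p dvd b"
    using quotient_of_denom_pos quotient_of_div \<open>r \<in> Zp p\<close> by (auto simp: Zp_def)
  then show "\<exists>a b. b \<noteq> 0 \<and> \<not> int p dvd b \<and> r = of_int a / of_int b"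
    by (intro exI[of _ a] exI[of _ b]) auto
next
  assume "\<exists>a b. b \<noteq> 0 \<and> \<not> int p dvd b \<and> r = of_int a / of_int b"
  then obtain a b where ab: "b \<noteq> 0" "\<not> int p dvd b" "r = of_int a / of_int b" by blast
  obtain a' b' where q: "quotient_of r = (a', b')" by (cases "quotient_of r")
  have "b' > 0" "r = of_int a' / of_int b'" "coprime a' b'"
    using q quotient_of_denom_pos quotient_of_div quotient_of_coprime by blast+
  then have "a' * b = a * b'"
    using ab by (simp add: field_simps flip: of_int_mult of_int_eq_iff)
  then have "b' dvd b"
    using \<open>coprime a' b'\<close> by (metis coprime_commute coprime_dvd_mult_right_iff dvd_triv_right)
  then show "r \<in> Zp p"
    using ab(2) q dvd_trans by (auto simp: Zp_def)
qed

locale p_local =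
  fixes p :: nat
  assumes prime_p: "Factorial_Ring.prime p"
begin

lemma Zp_of_int [simp]: "of_int a \<in> Zp p"
proof -
  have "\<not> int p dvd 1"
    using prime_p by (metis not_prime_unit prime_nat_int_transfer)
  then show ?thesis
    unfolding Zp_iff[OF prime_p] by (intro exI[of _ a] exI[of _ 1]) simp
qed

lemma Zp_of_nat [simp]: "of_nat a \<in> Zp p"
  using Zp_of_int[of "int a"] by simp

lemma Zp_0 [simp]: "0 \<in> Zp p" and Zp_1 [simp]: "1 \<in> Zp p"
  using Zp_of_nat[of 0] Zp_of_nat[of 1] by simp_all

lemma Zp_add [intro]:
  assumes "r \<in> Zp p" "s \<in> Zp p" shows "r + s \<in> Zp p"
proof -
  obtain a b c d where ab: "b \<noteq> 0" "\<not> int p dvd b" "r = of_int a / of_int b"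
    and cd: "d \<noteq> 0" "\<not> int p dvd d" "s = of_int c / of_int d"
    using assms Zp_iff[OF prime_p] by blast
  have "r + s = of_int (a * d + c * b) / of_int (b * d)" "b * d \<noteq> 0" "\<not> int p dvd b * d"
    using ab cd prime_p by (simp_all add: field_simps prime_dvd_mult_iff)
  then show ?thesis
    using Zp_iff[OF prime_p] by blast
qed

lemma Zp_mult [intro]:
  assumes "r \<in> Zp p" "s \<in> Zp p" shows "r * s \<in> Zp p"
proof -
  obtain a b c d where ab: "b \<noteq> 0" "\<not> int p dvd b" "r = of_int a / of_int b"
    and cd: "d \<noteq> 0" "\<not> int p dvd d" "s = of_int c / of_int d"
    using assms Zp_iff[OF prime_p] by blast
  have "r * s = of_int (a * c) / of_int (b * d)" "b * d \<noteq> 0" "\<not> int p dvd b * d"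
    using ab cd prime_p by (simp_all add: prime_dvd_mult_iff)
  then show ?thesis
    using Zp_iff[OF prime_p] by blast
qed

lemma Zp_uminus [intro]: "r \<in> Zp p \<Longrightarrow> - r \<in> Zp p"
  using Zp_mult[OF Zp_of_int[of "-1"]] by simp

lemma Zp_diff [intro]: "r \<in> Zp p \<Longrightarrow> s \<in> Zp p \<Longrightarrow> r - s \<in> Zp p"
  using Zp_add[OF _ Zp_uminus] by simp

lemma Zp_power [intro, simp]: "r \<in> Zp p \<Longrightarrow> r ^ k \<in> Zp p"
  by (induction k) auto

lemma Zp_sum [intro]: "(\<And>i. i \<in> A \<Longrightarrow> f i \<in> Zp p) \<Longrightarrow> sum f A \<in> Zp p"
  by (induction A rule: infinite_finite_induct) auto

lemma Zp_inverse_of_int: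
  assumes "\<not> int p dvd a" shows "1 / of_int a \<in> Zp p"
  using assms by (intro iffD2[OF Zp_iff[OF prime_p]] exI[of _ 1] exI[of _ a]) auto

lemma p_pos: "p > 0"
  using prime_p prime_gt_0_nat by blast

lemma inverse_p_notin_Zp: "1 / of_nat p \<notin> Zp p"
proof
  assume "1 / of_nat p \<in> Zp p"
  then obtain a b where "b \<noteq> 0" "\<not> int p dvd b" "1 / of_nat p = (of_int a / of_int b :: rat)"
    using Zp_iff[OF prime_p] by blast
  then have "of_int b = (of_int (int p * a) :: rat)"
    using p_pos by (simp add: field_simps)
  then have "b = int p * a"
    by (metis of_int_eq_iff)
  with \<open>\<not> int p dvd b\<close> show False by simp
qed

lemma Zp_eq_p_power_times_unit:
  assumes "r \<in> Zp p" "r \<noteq> 0"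
  obtains e u where "u \<in> Zp p" "1 / u \<in> Zp p" "r = of_nat p ^ e * u"
proof -
  obtain a b where ab: "b \<noteq> 0" "\<not> int p dvd b" "r = of_int a / of_int b"
    using assms(1) Zp_iff[OF prime_p] by blast
  have "a \<noteq> 0" "\<not> is_unit (int p)"
    using ab assms(2) prime_p by (auto simp: not_prime_unit)
  then obtain a' where a': "a = int p ^ multiplicity (int p) a * a'" "\<not> int p dvd a'"
    using multiplicity_decompose' by blast
  show thesis
  proof
    show "of_int a' / of_int b \<in> Zp p"
      using ab Zp_iff[OF prime_p] by blast
    have "a' \<noteq> 0"
      using a' by auto
    then show "1 / (of_int a' / of_int b) \<in> Zp p"
      using a' Zp_iff[OF prime_p, of "of_int b / of_int a'"] by auto
    show "r = of_nat p ^ multiplicity (int p) a * (of_int a' / of_int b)"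
      using ab a' by (metis of_int_mult of_int_of_nat_eq of_int_power times_divide_eq_right)
  qed
qed

lemma Zp_eq_0_if_p_power_divisible:
  assumes "r \<in> Zp p" "\<And>k. \<exists>s \<in> Zp p. r = of_nat p ^ k * s"
  shows "r = 0"
proof (rule ccontr)
  assume "r \<noteq> 0"
  then obtain e u where eu: "u \<in> Zp p" "1 / u \<in> Zp p" "r = of_nat p ^ e * u"
    using Zp_eq_p_power_times_unit assms(1) by blast
  obtain s where s: "s \<in> Zp p" "r = of_nat p ^ Suc e * s"
    using assms(2) by blast
  have "u = of_nat p * s" "u \<noteq> 0"
    using eu s p_pos \<open>r \<noteq> 0\<close> by auto
  then have "1 / of_nat p = s * (1 / u)"
    by (simp add: field_simps)
  also have "\<dots> \<in> Zp p"
    using s eu by blast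
  finally show False
    using inverse_p_notin_Zp by blast
qed

definition pZp :: "rat set" where
  "pZp = {r. r / of_nat p \<in> Zp p}"

lemma pZp_iff: "r \<in> pZp \<longleftrightarrow> (\<exists>s \<in> Zp p. r = of_nat p * s)"
proof
  assume "r \<in> pZp"
  moreover have "r = of_nat p * (r / of_nat p)"
    using p_pos by simp
  ultimately show "\<exists>s \<in> Zp p. r = of_nat p * s"
    unfolding pZp_def by blast
next
  assume "\<exists>s \<in> Zp p. r = of_nat p * s"
  then show "r \<in> pZp"
    using p_pos by (auto simp: pZp_def)
qed

lemma pZp_0 [simp]: "0 \<in> pZp"
  by (simp add: pZp_def)

lemma pZp_mult [intro]: "r \<in> Zp p \<Longrightarrow> s \<in> pZp \<Longrightarrow> r * s \<in> pZp"
  unfolding pZp_iff by (metis Zp_mult mult.left_commute)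

lemma pZp_uminus [intro]: "r \<in> pZp \<Longrightarrow> - r \<in> pZp"
  using pZp_mult[OF Zp_of_int[of "-1"]] by simp

lemma pZp_of_int:
  assumes "int p dvd a" shows "of_int a \<in> pZp"
proof -
  obtain k where "a = int p * k"
    using assms by (elim dvdE)
  then have "of_int a = of_nat p * (of_int k :: rat)"
    by simp
  then show ?thesis
    unfolding pZp_iff using Zp_of_int by blast
qed

end

definition Theta_range :: "nat \<Rightarrow> nat \<Rightarrow> nat \<Rightarrow> rat poly" where
  "Theta_range q l m = (\<Prod>i\<in>{l<..m}. [:- qi q i, 1:])"

lemma Theta_eq_Theta_range: "Theta q n = Theta_range q 0 n"
  unfolding Theta_def Theta_range_def by (rule prod.cong) auto

lemma Theta_range_split:
  assumes "l \<le> k" "k \<le> m"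
  shows "Theta_range q l m = Theta_range q l k * Theta_range q k m"
proof -
  have "{l<..m} = {l<..k} \<union> {k<..m}"
    using assms by auto
  then show ?thesis
    unfolding Theta_range_def by (simp add: prod.union_disjoint ivl_disj_int)
qed

lemma Theta_range_Suc:
  assumes "l \<le> m"
  shows "Theta_range q l (Suc m) = Theta_range q l m * [:- qi q (Suc m), 1:]"
proof -
  have "{l<..Suc m} = insert (Suc m) {l<..m}"
    using assms by auto
  then show ?thesis
    unfolding Theta_range_def by (simp add: mult.commute)
qed

lemma lead_coeff_Theta_range [simp]: "lead_coeff (Theta_range q l m) = 1"
  unfolding Theta_range_def lead_coeff_prod by simp

lemma degree_Theta_range [simp]: "degree (Theta_range q l m) = m - l"
  unfolding Theta_range_def by (subst degree_prod_sum_eq) auto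

lemma lead_coeff_Theta [simp]: "lead_coeff (Theta q n) = 1"
  unfolding Theta_eq_Theta_range by (rule lead_coeff_Theta_range)

lemma degree_Theta [simp]: "degree (Theta q n) = n"
  by (simp add: Theta_eq_Theta_range)

lemma Theta_nonzero [simp]: "Theta q n \<noteq> 0"
  using lead_coeff_Theta[of q n] by (metis leading_coeff_0_iff zero_neq_one)

lemma Theta_Suc: "Theta q (Suc n) = Theta q n * [:- qi q (Suc n), 1:]"
  by (simp add: Theta_eq_Theta_range Theta_range_Suc)

lemma Theta_split: "l \<le> m \<Longrightarrow> Theta q m = Theta q l * Theta_range q l m"
  unfolding Theta_eq_Theta_range by (rule Theta_range_split) simp_all

lemma Theta_dvd: "l \<le> m \<Longrightarrow> Theta q l dvd Theta q m"
  by (simp add: Theta_split)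

lemma coeff_Theta_eq_0: "n < i \<Longrightarrow> coeff (Theta q n) i = 0"
  by (simp add: coeff_eq_0)

lemma coeff_Atrunc_eq_0: "N \<le> i \<Longrightarrow> coeff (Atrunc q a N) i = 0"
  by (simp add: Atrunc_def coeff_sum coeff_Theta_eq_0)

lemma Atrunc_Suc: "Atrunc q a (Suc k) = Atrunc q a k + smult (a k) (Theta q k)"
  by (simp add: Atrunc_def)

lemma coeff_Atrunc_top: "coeff (Atrunc q a (Suc k)) k = a k"
  using lead_coeff_Theta[of q k] by (simp add: Atrunc_Suc coeff_Atrunc_eq_0)

lemma mod_Theta_eq_self:
  assumes "\<And>i. N \<le> i \<Longrightarrow> coeff f i = 0"
  shows "f mod Theta q N = f"
proof (cases "f = 0")
  case False
  then have "degree f < N"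
    using assms by (metis leading_coeff_0_iff not_le)
  then show ?thesis
    by (simp add: mod_poly_less)
qed simp

lemma Atrunc_mod_Theta [simp]: "Atrunc q a N mod Theta q N = Atrunc q a N"
  by (rule mod_Theta_eq_self) (rule coeff_Atrunc_eq_0)

lemma mod_Theta_expansion:
  "f mod Theta q N = Atrunc q (\<lambda>j. coeff (f mod Theta q (Suc j)) j) N"
proof (induction N)
  case 0
  then show ?case
    by (simp add: Atrunc_def Theta_def)
next
  case (Suc N)
  define r where "r = f mod Theta q (Suc N)"
  define r' where "r' = r - smult (coeff r N) (Theta q N)"
  have "coeff r i = 0" if "Suc N \<le> i" for i
    using degree_mod_less[of "Theta q (Suc N)" f] that unfolding r_def
    by (auto intro: coeff_eq_0)
  then have "coeff r' i = 0" if "N \<le> i" for i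
    using that lead_coeff_Theta[of q N]
    by (cases "i = N") (auto simp: r'_def coeff_Theta_eq_0)
  then have "r' = r' mod Theta q N"
    by (simp add: mod_Theta_eq_self)
  also have "\<dots> = f mod Theta q N"
    by (simp add: r'_def r_def poly_mod_diff_left mod_smult_left mod_mod_cancel Theta_dvd)
  finally have "r = smult (coeff r N) (Theta q N) + f mod Theta q N"
    by (simp add: r'_def algebra_simps)
  with Suc.IH show ?case
    by (simp add: r_def Atrunc_Suc add.commute)
qed

section \<open>Polynomials over Z_(p) and congruences modulo (p, D)\<close>

context p_local
begin

definition Zp_poly :: "rat poly \<Rightarrow> bool" where
  "Zp_poly f \<longleftrightarrow> (\<forall>i. coeff f i \<in> Zp p)"

lemma Zp_poly_0 [simp]: "Zp_poly 0"
  by (simp add: Zp_poly_def)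

lemma Zp_poly_1 [simp]: "Zp_poly 1"
  by (simp add: Zp_poly_def coeff_1)

lemma Zp_poly_const [intro]: "c \<in> Zp p \<Longrightarrow> Zp_poly [:c:]"
  by (simp add: Zp_poly_def coeff_pCons split: nat.split)

lemma Zp_poly_linear [intro]: "c \<in> Zp p \<Longrightarrow> d \<in> Zp p \<Longrightarrow> Zp_poly [:c, d:]"
  by (simp add: Zp_poly_def coeff_pCons split: nat.split)

lemma Zp_poly_add [intro]: "Zp_poly f \<Longrightarrow> Zp_poly g \<Longrightarrow> Zp_poly (f + g)"
  by (auto simp: Zp_poly_def)

lemma Zp_poly_diff [intro]: "Zp_poly f \<Longrightarrow> Zp_poly g \<Longrightarrow> Zp_poly (f - g)"
  by (auto simp: Zp_poly_def)

lemma Zp_poly_uminus [intro]: "Zp_poly f \<Longrightarrow> Zp_poly (- f)"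
  by (auto simp: Zp_poly_def)

lemma Zp_poly_smult [intro]: "c \<in> Zp p \<Longrightarrow> Zp_poly f \<Longrightarrow> Zp_poly (smult c f)"
  by (auto simp: Zp_poly_def)

lemma Zp_poly_monom [intro]: "c \<in> Zp p \<Longrightarrow> Zp_poly (monom c k)"
  by (auto simp: Zp_poly_def coeff_monom)

lemma Zp_poly_mult [intro]: "Zp_poly f \<Longrightarrow> Zp_poly g \<Longrightarrow> Zp_poly (f * g)"
  unfolding Zp_poly_def coeff_mult by (intro allI Zp_sum) auto

lemma Zp_poly_sum [intro]: "(\<And>i. i \<in> A \<Longrightarrow> Zp_poly (f i)) \<Longrightarrow> Zp_poly (sum f A)"
  by (induction A rule: infinite_finite_induct) auto

lemma Zp_poly_prod [intro]: "(\<And>i. i \<in> A \<Longrightarrow> Zp_poly (f i)) \<Longrightarrow> Zp_poly (prod f A)"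
  by (induction A rule: infinite_finite_induct) auto

text \<open>Long division by a monic polynomial never divides by a coefficient.\<close>
lemma Zp_poly_div_mod_monic:
  assumes D: "Zp_poly D" "lead_coeff D = 1"
  shows "Zp_poly f \<Longrightarrow> Zp_poly (f div D) \<and> Zp_poly (f mod D)"
proof (induction "degree f" arbitrary: f rule: less_induct)
  case less
  show ?case
  proof (cases "degree f < degree D")
    case True
    then show ?thesis
      using less.prems by (simp add: div_poly_less mod_poly_less)
  next
    case False
    define c where "c = lead_coeff f"
    define k where "k = degree f - degree D"
    define f' where "f' = f - monom c k * D"
    have c: "c \<in> Zp p"
      using less.prems by (simp add: Zp_poly_def c_def)
    have "Zp_poly f'"
      unfolding f'_def using c less.prems D by auto
    have "coeff f' (degree f) = 0"
      using False D unfolding f'_def c_def k_def by (simp add: coeff_monom_mult)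
    moreover have "degree f' \<le> degree f"
    proof -
      have "degree (monom c k * D) \<le> degree f"
        using degree_mult_le[of "monom c k" D] degree_monom_le[of c k] False
        unfolding k_def by linarith
      then show ?thesis
        unfolding f'_def using degree_diff_le by blast
    qed
    ultimately have f'_small: "f' = 0 \<or> degree f' < degree f"
      by (metis le_neq_implies_less leading_coeff_0_iff)
    have "D \<noteq> 0"
      using D(2) by auto
    have "f = f' + monom c k * D"
      unfolding f'_def by simp
    then have "f div D = monom c k + f' div D" "f mod D = f' mod D"
      using \<open>D \<noteq> 0\<close> by (simp_all add: add.commute)
    then show ?thesis
      using f'_small less.hyps[OF _ \<open>Zp_poly f'\<close>] c by auto
  qed
qed

definition pcong :: "rat poly \<Rightarrow> rat poly \<Rightarrow> rat poly \<Rightarrow> bool" where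
  "pcong D f g \<longleftrightarrow> (\<exists>U W. Zp_poly U \<and> Zp_poly W \<and> f - g = smult (of_nat p) U + D * W)"

lemma pcongI: "Zp_poly U \<Longrightarrow> Zp_poly W \<Longrightarrow> f - g = smult (of_nat p) U + D * W \<Longrightarrow> pcong D f g"
  unfolding pcong_def by blast

lemma pcongE:
  assumes "pcong D f g"
  obtains U W where "Zp_poly U" "Zp_poly W" "f - g = smult (of_nat p) U + D * W"
  using assms unfolding pcong_def by blast

lemma pcong_refl [intro]: "pcong D f f"
  by (rule pcongI[of 0 0]) auto

lemma pcong_sym:
  assumes "pcong D f g" shows "pcong D g f"
proof -
  obtain U W where "Zp_poly U" "Zp_poly W" "f - g = smult (of_nat p) U + D * W"
    using assms by (rule pcongE)
  then show ?thesis
    by (intro pcongI[of "- U" "- W"]) (auto simp: algebra_simps)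
qed

lemma pcong_add:
  assumes "pcong D f g" "pcong D f' g'" shows "pcong D (f + f') (g + g')"
proof -
  obtain U W where "Zp_poly U" "Zp_poly W" "f - g = smult (of_nat p) U + D * W"
    using assms(1) by (rule pcongE)
  moreover obtain U' W' where "Zp_poly U'" "Zp_poly W'" "f' - g' = smult (of_nat p) U' + D * W'"
    using assms(2) by (rule pcongE)
  ultimately show ?thesis
    by (intro pcongI[of "U + U'" "W + W'"]) (auto simp: algebra_simps smult_add_right)
qed

lemma pcong_trans [trans]:
  assumes "pcong D f g" "pcong D g h" shows "pcong D f h"
  using pcong_add[OF assms] by (simp add: pcong_def)

lemma pcong_sum: "(\<And>i. i \<in> A \<Longrightarrow> pcong D (f i) (g i)) \<Longrightarrow> pcong D (sum f A) (sum g A)"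
  by (induction A rule: infinite_finite_induct) (auto intro: pcong_add)

lemma pcong_mult:
  assumes "Zp_poly h" "pcong D f g" shows "pcong D (h * f) (h * g)"
proof -
  obtain U W where "Zp_poly U" "Zp_poly W" "f - g = smult (of_nat p) U + D * W"
    using assms(2) by (rule pcongE)
  then have "h * f - h * g = smult (of_nat p) (h * U) + D * (h * W)"
    by (simp add: algebra_simps flip: right_diff_distrib)
  then show ?thesis
    using \<open>Zp_poly U\<close> \<open>Zp_poly W\<close> assms(1) by (intro pcongI) auto
qed

lemma pcong_mult_both:
  "Zp_poly f' \<Longrightarrow> Zp_poly g \<Longrightarrow> pcong D f g \<Longrightarrow> pcong D f' g' \<Longrightarrow> pcong D (f * f') (g * g')"
  using pcong_mult[of f' D f g] pcong_mult[of g D f' g'] pcong_trans by (metis mult.commute)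

lemma pcong_smult: "c \<in> Zp p \<Longrightarrow> pcong D f g \<Longrightarrow> pcong D (smult c f) (smult c g)"
  using pcong_mult[OF Zp_poly_const] by simp

lemma pcong_mult_modulus:
  assumes "Zp_poly h" "pcong D f g" shows "pcong (h * D) (h * f) (h * g)"
proof -
  obtain U W where "Zp_poly U" "Zp_poly W" "f - g = smult (of_nat p) U + D * W"
    using assms(2) by (rule pcongE)
  then have "h * f - h * g = smult (of_nat p) (h * U) + (h * D) * W"
    by (simp add: algebra_simps flip: right_diff_distrib)
  then show ?thesis
    using \<open>Zp_poly U\<close> \<open>Zp_poly W\<close> assms(1) by (intro pcongI) auto
qed

lemma pcong_dvd_modulus:
  assumes "Zp_poly E" "pcong (E * D) f g" shows "pcong D f g"
proof -
  obtain U W where "Zp_poly U" "Zp_poly W" "f - g = smult (of_nat p) U + (E * D) * W"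
    using assms(2) by (rule pcongE)
  then show ?thesis
    using assms(1) by (intro pcongI[of U "E * W"]) (auto simp: ac_simps)
qed

lemma pcong_zero_modulus:
  assumes "pcong 0 f g" shows "pcong D f g"
proof -
  obtain U W where "Zp_poly U" "f - g = smult (of_nat p) U + 0 * W"
    using assms by (rule pcongE)
  then show ?thesis
    by (intro pcongI[of U 0]) auto
qed

lemma pcong_multiple: "Zp_poly W \<Longrightarrow> pcong D (D * W) 0"
  by (rule pcongI[of 0 W]) auto

lemma pcong_mod:
  assumes "Zp_poly D" "lead_coeff D = 1" "Zp_poly f"
  shows "pcong D f (f mod D)"
  using Zp_poly_div_mod_monic[OF assms(1,2,3)] div_mult_mod_eq[of f D]
  by (intro pcongI[of 0 "f div D"]) (auto simp: algebra_simps)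

lemma pcong_coeff_mod:
  assumes "Zp_poly D" "lead_coeff D = 1" "pcong D f g"
  shows "coeff (f mod D) k - coeff (g mod D) k \<in> pZp"
proof -
  obtain U W where U: "Zp_poly U" and "f - g = smult (of_nat p) U + D * W"
    using assms(3) by (rule pcongE)
  then have "f mod D - g mod D = smult (of_nat p) (U mod D)"
    by (simp add: mod_smult_left flip: poly_mod_diff_left)
  then have "coeff (f mod D) k - coeff (g mod D) k = of_nat p * coeff (U mod D) k"
    by (simp only: coeff_smult flip: coeff_diff)
  moreover have "coeff (U mod D) k \<in> Zp p"
    using Zp_poly_div_mod_monic[OF assms(1,2) U] by (simp add: Zp_poly_def)
  ultimately show ?thesis
    unfolding pZp_iff by blast
qed

end

section \<open>Division by Phi_n modulo p\<close>

lemma qi_eq_if: "qi q i = (if even i then of_nat q ^ (i div 2) else 1 / of_nat q ^ (i div 2))"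
  unfolding qi_def by (auto simp: power_int_minus power_int_of_nat divide_inverse)

lemma Atrunc_diff: "Atrunc q a N - Atrunc q b N = Atrunc q (\<lambda>j. a j - b j) N"
  by (simp add: Atrunc_def smult_diff_left sum_subtractf)

lemma Atrunc_cmult: "Atrunc q (\<lambda>j. c * a j) N = smult c (Atrunc q a N)"
  by (induction N) (simp_all add: Atrunc_Suc Atrunc_def smult_add_right)

lemma Atrunc_Phi: "Atrunc q (Phi n) (Suc k) = (if n \<le> k then Theta q n else 0)"
proof -
  have "Atrunc q (Phi n) (Suc k) = (\<Sum>j<Suc k. if j = n then Theta q j else 0)"
    unfolding Atrunc_def Phi_def by (rule sum.cong) auto
  then show ?thesis
    by (simp add: sum.delta)
qed

lemma Amult_Phi:
  "Amult q (Phi n) b k =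
    (if n \<le> k then coeff ((Theta q n * Atrunc q b (Suc k)) mod Theta q (Suc k)) k else 0)"
  by (simp add: Amult_def Atrunc_Phi)

text \<open>Partial sums of the formal quotient a / Phi_n, for a in A_n. They do not converge in A, but
  they do modulo p.\<close>
definition Phi_cofactor :: "nat \<Rightarrow> nat \<Rightarrow> (nat \<Rightarrow> rat) \<Rightarrow> nat \<Rightarrow> rat poly" where
  "Phi_cofactor q n a N = (\<Sum>m\<in>{n..<N}. smult (a m) (Theta_range q n m))"

lemma Theta_mult_Phi_cofactor:
  assumes "\<And>m. m < n \<Longrightarrow> a m = 0" "n \<le> N"
  shows "Theta q n * Phi_cofactor q n a N = Atrunc q a N"
proof -
  have "Atrunc q a N = (\<Sum>m\<in>{..<n} \<union> {n..<N}. smult (a m) (Theta q m))"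
    unfolding Atrunc_def using assms(2) by (intro sum.cong) auto
  also have "\<dots> = (\<Sum>m\<in>{n..<N}. smult (a m) (Theta q m))"
    using assms(1) by (subst sum.union_disjoint) auto
  also have "\<dots> = (\<Sum>m\<in>{n..<N}. Theta q n * smult (a m) (Theta_range q n m))"
  proof (rule sum.cong)
    fix m
    assume "m \<in> {n..<N}"
    then have "Theta q m = Theta q n * Theta_range q n m"
      by (intro Theta_split) auto
    then show "smult (a m) (Theta q m) = Theta q n * smult (a m) (Theta_range q n m)"
      by simp
  qed simp
  finally show ?thesis
    by (simp add: Phi_cofactor_def sum_distrib_left)
qed

lemma Phi_cofactor_extend:
  assumes "n \<le> N" "N \<le> N'"
  shows "Phi_cofactor q n a N' =
    Phi_cofactor q n a N + (\<Sum>m\<in>{N..<N'}. smult (a m) (Theta_range q n m))"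
proof -
  have "{n..<N'} = {n..<N} \<union> {N..<N'}"
    using assms by auto
  then show ?thesis
    by (simp add: Phi_cofactor_def sum.union_disjoint)
qed

lemma Phi_cofactor_split:
  assumes "n \<le> N" "N \<le> N'"
  shows "Phi_cofactor q n a N' = Phi_cofactor q n a N + Theta_range q n N * Phi_cofactor q N a N'"
proof -
  have "(\<Sum>m\<in>{N..<N'}. smult (a m) (Theta_range q n m)) =
      (\<Sum>m\<in>{N..<N'}. Theta_range q n N * smult (a m) (Theta_range q N m))"
  proof (rule sum.cong)
    fix m
    assume "m \<in> {N..<N'}"
    then have "Theta_range q n m = Theta_range q n N * Theta_range q N m"
      using assms by (intro Theta_range_split) auto
    then show "smult (a m) (Theta_range q n m) = Theta_range q n N * smult (a m) (Theta_range q N m)"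
      by simp
  qed simp
  then show ?thesis
    using Phi_cofactor_extend[OF assms] by (simp add: Phi_cofactor_def sum_distrib_left)
qed

locale p_local_q = p_local +
  fixes q :: nat
  assumes not_dvd_q: "\<not> p dvd q"
begin

lemma not_dvd_q_power: "\<not> int p dvd int q ^ k"
  using not_dvd_q prime_p prime_dvd_power[of "int p" "int q" k] by auto

lemma qi_in_Zp [intro]: "qi q i \<in> Zp p"
  using Zp_inverse_of_int[OF not_dvd_q_power[of "i div 2"]] by (auto simp: qi_eq_if)

lemma Zp_poly_Theta_range [intro]: "Zp_poly (Theta_range q l m)"
  unfolding Theta_range_def by (intro Zp_poly_prod Zp_poly_linear) auto

lemma Zp_poly_Theta [intro]: "Zp_poly (Theta q n)"
  by (simp add: Theta_eq_Theta_range Zp_poly_Theta_range)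

lemma Zp_poly_Phi_cofactor [intro]: "(\<And>m. a m \<in> Zp p) \<Longrightarrow> Zp_poly (Phi_cofactor q n a N)"
  unfolding Phi_cofactor_def by auto

text \<open>Fermat's little theorem: q^(p-1) = 1 modulo p.\<close>
lemma qi_periodic_mod_p: "qi q (i + 2 * (p - 1) * t) - qi q i \<in> pZp"
proof -
  define u where "u = q ^ ((p - 1) * t)"
  have "[q ^ (p - 1) = 1] (mod p)"
    using fermat_theorem[OF prime_p not_dvd_q] .
  then have "[u = 1] (mod p)"
    unfolding u_def by (metis cong_pow power_mult power_one)
  then have "int p dvd int u - 1"
    by (metis cong_iff_dvd_diff cong_int_iff of_nat_1)
  then have u_1: "of_nat u - 1 \<in> pZp"
    using pZp_of_int[of "int u - 1"] by simp
  have "\<not> int p dvd int u"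
    unfolding u_def using not_dvd_q_power by (simp add: of_nat_power)
  then have u_inv: "1 / of_nat u \<in> Zp p" "(of_nat u :: rat) \<noteq> 0"
    using Zp_inverse_of_int[of "int u"] by (auto intro: Nat.gr0I)
  have "1 / of_nat u - 1 = (1 / of_nat u) * - (of_nat u - 1 :: rat)"
    using u_inv by (simp add: field_simps)
  then have u_inv_1: "1 / of_nat u - 1 \<in> pZp"
    using u_1 u_inv by (metis pZp_mult pZp_uminus)
  have idx: "even (i + 2 * (p - 1) * t) = even i"
    "(i + 2 * (p - 1) * t) div 2 = i div 2 + (p - 1) * t"
    by simp_all
  show ?thesis
  proof (cases "even i")
    case True
    then have "qi q (i + 2 * (p - 1) * t) - qi q i = qi q i * (of_nat u - 1)"
      using idx by (simp add: qi_eq_if u_def power_add algebra_simps)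
    then show ?thesis
      using u_1 by auto
  next
    case False
    then have "qi q (i + 2 * (p - 1) * t) - qi q i = qi q i * (1 / of_nat u - 1)"
      using idx by (simp add: qi_eq_if u_def power_add algebra_simps)
    then show ?thesis
      using u_inv_1 by auto
  qed
qed

lemma Theta_range_shift_pcong:
  "pcong 0 (Theta_range q (2 * (p - 1) * t) (2 * (p - 1) * t + J)) (Theta q J)"
proof (induction J)
  case 0
  then show ?case
    by (simp add: Theta_range_def Theta_def pcong_refl)
next
  case (Suc J)
  define s where "s = 2 * (p - 1) * t"
  define d where "d = qi q (Suc J) - qi q (Suc (s + J))"
  have "- d \<in> pZp"
    using qi_periodic_mod_p[of "Suc J" t] by (simp add: d_def s_def add.commute)
  then have "d / of_nat p \<in> Zp p"
    using pZp_uminus[of "- d"] by (simp add: pZp_def)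
  moreover have "[:- qi q (Suc (s + J)), 1:] - [:- qi q (Suc J), 1:] =
      smult (of_nat p) [:d / of_nat p:] + 0 * 0"
    using p_pos by (simp add: d_def)
  ultimately have "pcong 0 [:- qi q (Suc (s + J)), 1:] [:- qi q (Suc J), 1:]"
    by (intro pcongI[of "[:d / of_nat p:]" 0]) auto
  then have "pcong 0 (Theta_range q s (s + J) * [:- qi q (Suc (s + J)), 1:])
      (Theta q J * [:- qi q (Suc J), 1:])"
    using Suc.IH unfolding s_def by (intro pcong_mult_both) (auto intro!: Zp_poly_linear)
  then show ?case
    by (simp add: s_def Theta_range_Suc Theta_Suc)
qed

lemma le_period_mult: "n \<le> 2 * (p - 1) * n"
proof -
  have "1 \<le> 2 * (p - 1)"
    using prime_ge_2_nat[OF prime_p] by simp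
  then show ?thesis
    using mult_le_mono1[of 1 "2 * (p - 1)" n] by simp
qed

text \<open>Theta_{n,m} contains the factor Theta_{s,s+J}, s = 2(p-1)n, which is Theta_J modulo p.\<close>
lemma Theta_range_pcong_0:
  assumes "2 * (p - 1) * n + J \<le> m"
  shows "pcong (Theta q J) (Theta_range q n m) 0"
proof -
  define s where "s = 2 * (p - 1) * n"
  have "n \<le> s"
    unfolding s_def by (rule le_period_mult)
  then have split: "Theta_range q n m = (Theta_range q n s * Theta_range q (s + J) m) * Theta_range q s (s + J)"
    using assms Theta_range_split[of n s m q] Theta_range_split[of s "s + J" m q]
    by (simp add: s_def ac_simps)
  have "pcong (Theta q J) (Theta_range q s (s + J)) (Theta q J)"
    using Theta_range_shift_pcong by (simp add: s_def pcong_zero_modulus)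
  also have "pcong (Theta q J) (Theta q J) 0"
    using pcong_multiple[of 1 "Theta q J"] by simp
  finally have "pcong (Theta q J) (Theta_range q s (s + J)) 0" .
  then have "pcong (Theta q J)
      ((Theta_range q n s * Theta_range q (s + J) m) * Theta_range q s (s + J))
      ((Theta_range q n s * Theta_range q (s + J) m) * 0)"
    by (intro pcong_mult) auto
  then show ?thesis
    unfolding split by simp
qed

lemma Phi_cofactor_pcong:
  assumes "\<And>m. a m \<in> Zp p" "2 * (p - 1) * n + J \<le> N" "N \<le> N'"
  shows "pcong (Theta q J) (Phi_cofactor q n a N') (Phi_cofactor q n a N)"
proof -
  have "n \<le> N"
    using assms(2) le_period_mult[of n] by linarith
  note split = Phi_cofactor_extend[OF this assms(3)]
  have "pcong (Theta q J) (\<Sum>m\<in>{N..<N'}. smult (a m) (Theta_range q n m)) (\<Sum>m\<in>{N..<N'}. 0)"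
  proof (rule pcong_sum)
    fix m
    assume "m \<in> {N..<N'}"
    then have "pcong (Theta q J) (Theta_range q n m) 0"
      using assms(2) by (intro Theta_range_pcong_0) auto
    then have "pcong (Theta q J) (smult (a m) (Theta_range q n m)) (smult (a m) 0)"
      by (rule pcong_smult[OF assms(1)])
    then show "pcong (Theta q J) (smult (a m) (Theta_range q n m)) 0"
      by simp
  qed
  then have "pcong (Theta q J) (Phi_cofactor q n a N + (\<Sum>m\<in>{N..<N'}. smult (a m) (Theta_range q n m)))
      (Phi_cofactor q n a N + (\<Sum>m\<in>{N..<N'}. 0))"
    by (rule pcong_add[OF pcong_refl])
  then show ?thesis
    unfolding split by simp
qed

lemma Atrunc_pcong_of_coords:
  assumes "Zp_poly H" "\<And>j. j < N \<Longrightarrow> b j - coeff (H mod Theta q (Suc j)) j \<in> pZp"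
  shows "pcong (Theta q N) (Atrunc q b N) H"
proof -
  define U where "U = Atrunc q (\<lambda>j. (b j - coeff (H mod Theta q (Suc j)) j) / of_nat p) N"
  have "Zp_poly U"
    unfolding U_def Atrunc_def using assms(2) by (auto simp: pZp_def)
  have "Atrunc q b N - H mod Theta q N = Atrunc q (\<lambda>j. b j - coeff (H mod Theta q (Suc j)) j) N"
    unfolding mod_Theta_expansion[of H q N] by (rule Atrunc_diff)
  also have "\<dots> = smult (of_nat p) U"
    using p_pos by (simp add: U_def flip: Atrunc_cmult)
  finally have "Atrunc q b N - H mod Theta q N = smult (of_nat p) U + 0 * 0"
    by simp
  then have "pcong 0 (Atrunc q b N) (H mod Theta q N)"
    using \<open>Zp_poly U\<close> by (intro pcongI) auto
  then have "pcong (Theta q N) (Atrunc q b N) (H mod Theta q N)"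
    by (rule pcong_zero_modulus)
  also have "pcong (Theta q N) (H mod Theta q N) H"
    using pcong_sym[OF pcong_mod[OF Zp_poly_Theta lead_coeff_Theta assms(1)]] .
  finally show ?thesis .
qed

lemma Theta_mult_Atrunc_pcong:
  assumes a: "\<And>m. a m \<in> Zp p" "\<And>m. m < n \<Longrightarrow> a m = 0"
    and "n \<le> N" "N \<le> N'" "pcong (Theta q N) (Atrunc q b N) (Phi_cofactor q n a N')"
  shows "pcong (Theta q N) (Theta q n * Atrunc q b N) (Atrunc q a N)"
proof -
  have Theta_N: "Theta q N = Theta q n * Theta_range q n N"
    using assms(3) by (rule Theta_split)
  have "pcong (Theta q n * Theta_range q n N) (Atrunc q b N) (Phi_cofactor q n a N')"
    using assms(5) by (simp only: Theta_N)
  then have "pcong (Theta_range q n N) (Atrunc q b N) (Phi_cofactor q n a N')"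
    by (rule pcong_dvd_modulus[OF Zp_poly_Theta])
  also have "pcong (Theta_range q n N) (Phi_cofactor q n a N') (Phi_cofactor q n a N)"
  proof -
    have "pcong (Theta_range q n N) (Theta_range q n N * Phi_cofactor q N a N') 0"
      using a(1) by (intro pcong_multiple) auto
    then have "pcong (Theta_range q n N)
        (Phi_cofactor q n a N + Theta_range q n N * Phi_cofactor q N a N') (Phi_cofactor q n a N + 0)"
      by (rule pcong_add[OF pcong_refl])
    then show ?thesis
      by (simp add: Phi_cofactor_split[OF assms(3,4)])
  qed
  finally have "pcong (Theta q n * Theta_range q n N)
      (Theta q n * Atrunc q b N) (Theta q n * Phi_cofactor q n a N)"
    by (rule pcong_mult_modulus[OF Zp_poly_Theta])
  then show ?thesis
    by (simp only: Theta_N[symmetric] Theta_mult_Phi_cofactor[OF a(2) assms(3)])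
qed

text \<open>The Theta-coordinates of the partial quotients Phi_cofactor stabilise modulo p;
  Phi_quotient n a takes the stable values, giving a / Phi_n modulo p.\<close>
definition Phi_quotient :: "nat \<Rightarrow> (nat \<Rightarrow> rat) \<Rightarrow> nat \<Rightarrow> rat" where
  "Phi_quotient n a j = coeff (Phi_cofactor q n a (2 * (p - 1) * n + Suc j) mod Theta q (Suc j)) j"

lemma Phi_quotient_in_Zp: "(\<And>m. a m \<in> Zp p) \<Longrightarrow> Phi_quotient n a j \<in> Zp p"
  using Zp_poly_div_mod_monic[OF Zp_poly_Theta lead_coeff_Theta Zp_poly_Phi_cofactor]
  by (simp add: Phi_quotient_def Zp_poly_def)

lemma Atrunc_Phi_quotient_pcong:
  assumes "\<And>m. a m \<in> Zp p"
  shows "pcong (Theta q N) (Atrunc q (Phi_quotient n a) N)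
    (Phi_cofactor q n a (2 * (p - 1) * n + Suc N))"
proof (rule Atrunc_pcong_of_coords)
  fix j
  assume "j < N"
  then have "pcong (Theta q (Suc j)) (Phi_cofactor q n a (2 * (p - 1) * n + Suc N))
      (Phi_cofactor q n a (2 * (p - 1) * n + Suc j))"
    using assms by (intro Phi_cofactor_pcong) auto
  then show "Phi_quotient n a j -
      coeff (Phi_cofactor q n a (2 * (p - 1) * n + Suc N) mod Theta q (Suc j)) j \<in> pZp"
    unfolding Phi_quotient_def by (rule pcong_coeff_mod[OF Zp_poly_Theta lead_coeff_Theta pcong_sym])
qed (use assms in auto)

lemma Amult_Phi_Phi_quotient:
  assumes "a \<in> Afilt p n"
  shows "Amult q (Phi n) (Phi_quotient n a) k - a k \<in> pZp"
proof (cases "n \<le> k")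
  case True
  have a: "\<And>m. a m \<in> Zp p" "\<And>m. m < n \<Longrightarrow> a m = 0"
    using assms by (auto simp: Afilt_def)
  have "pcong (Theta q (Suc k)) (Theta q n * Atrunc q (Phi_quotient n a) (Suc k)) (Atrunc q a (Suc k))"
    by (rule Theta_mult_Atrunc_pcong[OF a _ _ Atrunc_Phi_quotient_pcong[OF a(1)]]) (use True in simp_all)
  from pcong_coeff_mod[OF Zp_poly_Theta lead_coeff_Theta this, of k] True show ?thesis
    by (simp add: Amult_Phi coeff_Atrunc_top)
next
  case False
  then show ?thesis
    using assms by (simp add: Amult_Phi Afilt_def)
qed

end

lemma Aring_simps:
  "carrier (Aring p q) = {a. \<forall>n. a n \<in> Zp p}"
  "a \<oplus>\<^bsub>Aring p q\<^esub> b = (\<lambda>n. a n + b n)"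
  "a \<otimes>\<^bsub>Aring p q\<^esub> b = Amult q a b"
  "\<one>\<^bsub>Aring p q\<^esub> = Aconst 1"
  "\<zero>\<^bsub>Aring p q\<^esub> = Aconst 0"
  by (auto simp: Aring_def Aconst_def)

lemma Atrunc_Aconst: "Atrunc q (Aconst c) (Suc k) = [:c:]"
proof -
  have "Atrunc q (Aconst c) (Suc k) = (\<Sum>j<Suc k. if j = 0 then smult c (Theta q j) else 0)"
    unfolding Atrunc_def Aconst_def by (rule sum.cong) auto
  then show ?thesis
    by (simp add: sum.delta Theta_def)
qed

lemma Amult_Aconst: "Amult q (Aconst c) b = (\<lambda>k. c * b k)"
  by (simp add: fun_eq_iff Amult_def Atrunc_Aconst mod_smult_left coeff_Atrunc_top)

lemma Aconst_mult: "Aconst r \<otimes>\<^bsub>Aring p q\<^esub> Aconst s = Aconst (r * s)"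
  unfolding Aring_simps Amult_Aconst by (simp add: Aconst_def fun_eq_iff)

lemma Aconst_add: "Aconst r \<oplus>\<^bsub>Aring p q\<^esub> Aconst s = Aconst (r + s)"
  by (simp add: Aring_simps Aconst_def fun_eq_iff)

context p_local_q
begin

lemma Aconst_in_carrier [intro, simp]: "r \<in> Zp p \<Longrightarrow> Aconst r \<in> carrier (Aring p q)"
  by (auto simp: Aring_simps Aconst_def)

lemma Phi_in_carrier [intro]: "Phi n \<in> carrier (Aring p q)"
  by (auto simp: Aring_simps Phi_def)

lemma Afilt_subset_carrier: "Afilt p n \<subseteq> carrier (Aring p q)"
  by (auto simp: Aring_simps Afilt_def)

lemma Afilt_decompose:
  assumes "a \<in> Afilt p n"
  obtains b c where "b \<in> carrier (Aring p q)" "c \<in> Afilt p n"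
    "a = Phi n \<otimes>\<^bsub>Aring p q\<^esub> b \<oplus>\<^bsub>Aring p q\<^esub> Aconst (of_nat p) \<otimes>\<^bsub>Aring p q\<^esub> c"
proof -
  define b where "b = Phi_quotient n a"
  have b: "\<And>j. b j \<in> Zp p" "\<And>k. Amult q (Phi n) b k - a k \<in> pZp"
    using assms Phi_quotient_in_Zp[of a] Amult_Phi_Phi_quotient[OF assms]
    by (auto simp: b_def Afilt_def)
  define c where "c k = (a k - Amult q (Phi n) b k) / of_nat p" for k
  have "c k \<in> Zp p" for k
    using pZp_uminus[OF b(2)[of k]] by (simp add: c_def pZp_def)
  moreover have "c k = 0" if "k < n" for k
    using assms that by (simp add: c_def Afilt_def Amult_Phi)
  moreover have "a = (\<lambda>k. Amult q (Phi n) b k + of_nat p * c k)"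
    using p_pos by (simp add: c_def fun_eq_iff)
  ultimately show thesis
    using b(1) by (intro that[of b c]) (auto simp: Afilt_def Aring_simps Amult_Aconst)
qed

end

section \<open>Modules over A\<close>

locale A_module = p_local_q +
  fixes M :: "(nat \<Rightarrow> rat, 'b) module"
  assumes module_M: "module (Aring p q) M"
begin

sublocale module "Aring p q" M
  by (rule module_M)

definition cmult :: "rat \<Rightarrow> 'b \<Rightarrow> 'b" where
  "cmult r v = Aconst r \<odot>\<^bsub>M\<^esub> v"

lemma cmult_closed [intro, simp]: "r \<in> Zp p \<Longrightarrow> v \<in> carrier M \<Longrightarrow> cmult r v \<in> carrier M"
  unfolding cmult_def by auto

lemma cmult_cmult:
  assumes "r \<in> Zp p" "s \<in> Zp p" "v \<in> carrier M"
  shows "cmult r (cmult s v) = cmult (r * s) v"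
  unfolding cmult_def using smult_assoc1[OF Aconst_in_carrier Aconst_in_carrier assms(3)] assms(1,2)
  by (simp add: Aconst_mult)

lemma cmult_add_left:
  assumes "r \<in> Zp p" "s \<in> Zp p" "v \<in> carrier M"
  shows "cmult (r + s) v = cmult r v \<oplus>\<^bsub>M\<^esub> cmult s v"
  unfolding cmult_def using smult_l_distr[OF Aconst_in_carrier Aconst_in_carrier assms(3)] assms(1,2)
  by (simp add: Aconst_add)

lemma cmult_add_right:
  "r \<in> Zp p \<Longrightarrow> v \<in> carrier M \<Longrightarrow> w \<in> carrier M \<Longrightarrow> cmult r (v \<oplus>\<^bsub>M\<^esub> w) = cmult r v \<oplus>\<^bsub>M\<^esub> cmult r w"
  unfolding cmult_def by (auto intro: smult_r_distr)

lemma cmult_1 [simp]: "v \<in> carrier M \<Longrightarrow> cmult 1 v = v"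
  unfolding cmult_def by (metis Aring_simps(4) smult_one)

lemma cmult_0 [simp]: "v \<in> carrier M \<Longrightarrow> cmult 0 v = \<zero>\<^bsub>M\<^esub>"
  unfolding cmult_def by (metis Aring_simps(5) smult_l_null)

definition Zp_span :: "'b set \<Rightarrow> 'b set" where
  "Zp_span S = {finsum M (\<lambda>s. cmult (c s) s) S | c. \<forall>s\<in>S. c s \<in> Zp p}"

lemma Zp_spanI: "(\<And>s. s \<in> S \<Longrightarrow> c s \<in> Zp p) \<Longrightarrow> finsum M (\<lambda>s. cmult (c s) s) S \<in> Zp_span S"
  unfolding Zp_span_def by blast

lemma Zp_spanE:
  assumes "v \<in> Zp_span S"
  obtains c where "\<And>s. s \<in> S \<Longrightarrow> c s \<in> Zp p" "v = finsum M (\<lambda>s. cmult (c s) s) S"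
  using assms unfolding Zp_span_def by blast

lemma cmult_funcset: "S \<subseteq> carrier M \<Longrightarrow> (\<And>s. s \<in> S \<Longrightarrow> c s \<in> Zp p) \<Longrightarrow> (\<lambda>s. cmult (c s) s) \<in> S \<rightarrow> carrier M"
  by auto

lemma Zp_span_closed: "S \<subseteq> carrier M \<Longrightarrow> v \<in> Zp_span S \<Longrightarrow> v \<in> carrier M"
  by (erule Zp_spanE) (simp add: M.finsum_closed cmult_funcset)

lemma Zp_span_add:
  assumes "S \<subseteq> carrier M" "u \<in> Zp_span S" "v \<in> Zp_span S"
  shows "u \<oplus>\<^bsub>M\<^esub> v \<in> Zp_span S"
proof -
  obtain c where c: "\<And>s. s \<in> S \<Longrightarrow> c s \<in> Zp p" "u = finsum M (\<lambda>s. cmult (c s) s) S"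
    using assms(2) unfolding Zp_span_def by blast
  obtain d where d: "\<And>s. s \<in> S \<Longrightarrow> d s \<in> Zp p" "v = finsum M (\<lambda>s. cmult (d s) s) S"
    using assms(3) unfolding Zp_span_def by blast
  have "u \<oplus>\<^bsub>M\<^esub> v = finsum M (\<lambda>s. cmult (c s) s \<oplus>\<^bsub>M\<^esub> cmult (d s) s) S"
    unfolding c(2) d(2)
    by (rule M.finsum_addf[symmetric, OF cmult_funcset[OF assms(1) c(1)] cmult_funcset[OF assms(1) d(1)]])
  also have "\<dots> = finsum M (\<lambda>s. cmult (c s + d s) s) S"
  proof (rule M.finsum_cong')
    show "cmult (c s) s \<oplus>\<^bsub>M\<^esub> cmult (d s) s = cmult (c s + d s) s" if "s \<in> S" for s
      using that assms(1) c(1) d(1) by (intro cmult_add_left[symmetric]) auto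
  next
    show "(\<lambda>s. cmult (c s + d s) s) \<in> S \<rightarrow> carrier M"
      using assms(1) c(1) d(1) by (intro cmult_funcset) auto
  qed simp
  also have "\<dots> \<in> Zp_span S"
    using c(1) d(1) by (intro Zp_spanI) auto
  finally show ?thesis .
qed

lemma Zp_span_cmult:
  assumes "finite S" "S \<subseteq> carrier M" "r \<in> Zp p" "v \<in> Zp_span S"
  shows "cmult r v \<in> Zp_span S"
proof -
  obtain d where d: "\<And>s. s \<in> S \<Longrightarrow> d s \<in> Zp p" "v = finsum M (\<lambda>s. cmult (d s) s) S"
    using assms(4) unfolding Zp_span_def by blast
  have "cmult r v = finsum M (\<lambda>s. cmult r (cmult (d s) s)) S"
    unfolding d(2) cmult_def[of r]
    using finsum_smult_ldistr[OF assms(1) Aconst_in_carrier[OF assms(3)] cmult_funcset[OF assms(2) d(1)]] .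
  also have "\<dots> = finsum M (\<lambda>s. cmult (r * d s) s) S"
  proof (rule M.finsum_cong')
    show "cmult r (cmult (d s) s) = cmult (r * d s) s" if "s \<in> S" for s
      using that assms(2,3) d(1) by (intro cmult_cmult) auto
  next
    show "(\<lambda>s. cmult (r * d s) s) \<in> S \<rightarrow> carrier M"
      using assms(2,3) d(1) by (intro cmult_funcset) auto
  qed simp
  also have "\<dots> \<in> Zp_span S"
    using assms(3) d(1) by (intro Zp_spanI) auto
  finally show ?thesis .
qed

lemma Zp_span_insert:
  assumes "finite S" "S \<subseteq> carrier M" "s \<in> carrier M" "s \<notin> S"
  shows "v \<in> Zp_span (insert s S) \<longleftrightarrow> (\<exists>r\<in>Zp p. \<exists>v'\<in>Zp_span S. v = cmult r s \<oplus>\<^bsub>M\<^esub> v')"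
proof
  assume "v \<in> Zp_span (insert s S)"
  then obtain c where c: "\<And>t. t \<in> insert s S \<Longrightarrow> c t \<in> Zp p"
    "v = finsum M (\<lambda>t. cmult (c t) t) (insert s S)"
    unfolding Zp_span_def by blast
  have "v = cmult (c s) s \<oplus>\<^bsub>M\<^esub> finsum M (\<lambda>t. cmult (c t) t) S"
    unfolding c(2) using c(1) assms
    by (intro M.finsum_insert cmult_funcset) auto
  moreover have "finsum M (\<lambda>t. cmult (c t) t) S \<in> Zp_span S"
    using c(1) by (intro Zp_spanI) auto
  ultimately show "\<exists>r\<in>Zp p. \<exists>v'\<in>Zp_span S. v = cmult r s \<oplus>\<^bsub>M\<^esub> v'"
    using c(1) by blast
next
  assume "\<exists>r\<in>Zp p. \<exists>v'\<in>Zp_span S. v = cmult r s \<oplus>\<^bsub>M\<^esub> v'"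
  then obtain r v' where r: "r \<in> Zp p" "v' \<in> Zp_span S" "v = cmult r s \<oplus>\<^bsub>M\<^esub> v'"
    by blast
  obtain c where c: "\<And>t. t \<in> S \<Longrightarrow> c t \<in> Zp p" "v' = finsum M (\<lambda>t. cmult (c t) t) S"
    using r(2) unfolding Zp_span_def by blast
  define c' where "c' = c(s := r)"
  have c': "\<And>t. t \<in> insert s S \<Longrightarrow> c' t \<in> Zp p"
    using r(1) c(1) by (auto simp: c'_def)
  have "finsum M (\<lambda>t. cmult (c' t) t) S = v'"
    unfolding c(2)
  proof (rule M.finsum_cong')
    show "(\<lambda>t. cmult (c t) t) \<in> S \<rightarrow> carrier M"
      using assms(2) c(1) by (rule cmult_funcset)
  qed (use assms(4) in \<open>auto simp: c'_def\<close>)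
  moreover have "finsum M (\<lambda>t. cmult (c' t) t) (insert s S) =
      cmult (c' s) s \<oplus>\<^bsub>M\<^esub> finsum M (\<lambda>t. cmult (c' t) t) S"
    using c' assms by (intro M.finsum_insert cmult_funcset) auto
  ultimately have "finsum M (\<lambda>t. cmult (c' t) t) (insert s S) = v"
    using r(3) by (simp add: c'_def)
  then show "v \<in> Zp_span (insert s S)"
    using Zp_spanI[of "insert s S" c', OF c'] by simp
qed

lemma Zp_span_empty: "Zp_span {} = {\<zero>\<^bsub>M\<^esub>}"
  by (auto simp: Zp_span_def)

lemma cmult_diff_in_Zp_span:
  assumes S: "finite S" "S \<subseteq> carrier M" and "s \<in> carrier M" "r \<in> Zp p" "r' \<in> Zp p"
    and u: "u \<in> Zp_span S" "u' \<in> Zp_span S"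
    and eq: "cmult r s \<oplus>\<^bsub>M\<^esub> u = cmult r' s \<oplus>\<^bsub>M\<^esub> u'"
  shows "cmult (r - r') s \<in> Zp_span S"
proof -
  have carrier: "u \<in> carrier M" "u' \<in> carrier M" "cmult (- 1) u \<in> carrier M"
    "cmult (r - r') s \<in> carrier M" "cmult r' s \<in> carrier M"
    using u S assms(3-5) Zp_span_closed Zp_uminus[OF Zp_1] by auto
  have "cmult r s = cmult r' s \<oplus>\<^bsub>M\<^esub> cmult (r - r') s"
    using cmult_add_left[of r' "r - r'" s] assms(3-5) by auto
  then have "cmult r' s \<oplus>\<^bsub>M\<^esub> (cmult (r - r') s \<oplus>\<^bsub>M\<^esub> u) = cmult r' s \<oplus>\<^bsub>M\<^esub> u'"
    using eq carrier by (simp add: M.a_assoc)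
  then have "(cmult (r - r') s \<oplus>\<^bsub>M\<^esub> u) \<oplus>\<^bsub>M\<^esub> cmult r' s = u' \<oplus>\<^bsub>M\<^esub> cmult r' s"
    using carrier by (simp add: M.a_comm)
  then have diff: "cmult (r - r') s \<oplus>\<^bsub>M\<^esub> u = u'"
    using carrier by simp
  have "u \<oplus>\<^bsub>M\<^esub> cmult (- 1) u = \<zero>\<^bsub>M\<^esub>"
    using cmult_add_left[OF Zp_1 Zp_uminus[OF Zp_1] carrier(1)] carrier(1) by simp
  then have "cmult (r - r') s = u' \<oplus>\<^bsub>M\<^esub> cmult (- 1) u"
    using carrier by (simp add: diff[symmetric] M.a_assoc)
  also have "\<dots> \<in> Zp_span S"
    using S u by (intro Zp_span_add Zp_span_cmult) auto
  finally show ?thesis .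
qed

definition infinitely_p_divisible :: "'b set \<Rightarrow> 'b \<Rightarrow> bool" where
  "infinitely_p_divisible S w \<longleftrightarrow> (\<forall>k. \<exists>v\<in>Zp_span S. w = cmult (of_nat p ^ k) v)"

lemma infinitely_p_divisible_insertE:
  assumes S: "finite S" "S \<subseteq> carrier M" "s \<in> carrier M" "s \<notin> S"
    and "infinitely_p_divisible (insert s S) w"
  obtains r v where "\<And>k. r k \<in> Zp p" "\<And>k. v k \<in> Zp_span S"
    "\<And>k. w = cmult (of_nat p ^ k) (cmult (r k) s \<oplus>\<^bsub>M\<^esub> v k)"
proof -
  have "\<exists>r v. r \<in> Zp p \<and> v \<in> Zp_span S \<and> w = cmult (of_nat p ^ k) (cmult r s \<oplus>\<^bsub>M\<^esub> v)" for k
  proof -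
    obtain v where "v \<in> Zp_span (insert s S)" "w = cmult (of_nat p ^ k) v"
      using assms(5) unfolding infinitely_p_divisible_def by blast
    moreover obtain r v' where "r \<in> Zp p" "v' \<in> Zp_span S" "v = cmult r s \<oplus>\<^bsub>M\<^esub> v'"
      using Zp_span_insert[OF S] \<open>v \<in> Zp_span (insert s S)\<close> by blast
    ultimately show ?thesis
      by blast
  qed
  then show thesis
    using that by metis
qed

lemma infinitely_p_divisible_insert_torsion:
  assumes S: "finite S" "S \<subseteq> carrier M" "s \<in> carrier M" "s \<notin> S"
    and torsion: "cmult (of_nat p ^ e) s \<in> Zp_span S"
    and "infinitely_p_divisible (insert s S) w"
  shows "infinitely_p_divisible S w"
  unfolding infinitely_p_divisible_def
proof
  fix k
  obtain r v where "\<And>k. r k \<in> Zp p" "\<And>k. v k \<in> Zp_span S"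
    and w: "\<And>k. w = cmult (of_nat p ^ k) (cmult (r k) s \<oplus>\<^bsub>M\<^esub> v k)"
    using infinitely_p_divisible_insertE[OF S assms(6)] by metis
  then have r: "r (k + e) \<in> Zp p" and v: "v (k + e) \<in> Zp_span S" "v (k + e) \<in> carrier M"
    using S Zp_span_closed by auto
  have "cmult (of_nat p ^ e) (cmult (r (k + e)) s \<oplus>\<^bsub>M\<^esub> v (k + e)) =
      cmult (r (k + e)) (cmult (of_nat p ^ e) s) \<oplus>\<^bsub>M\<^esub> cmult (of_nat p ^ e) (v (k + e))"
    using r v S(3) by (simp add: cmult_add_right cmult_cmult mult.commute)
  moreover have "w = cmult (of_nat p ^ k)
      (cmult (of_nat p ^ e) (cmult (r (k + e)) s \<oplus>\<^bsub>M\<^esub> v (k + e)))"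
    using r v S(3) by (simp add: w[of "k + e"] cmult_cmult power_add)
  moreover have "cmult (r (k + e)) (cmult (of_nat p ^ e) s) \<oplus>\<^bsub>M\<^esub> cmult (of_nat p ^ e) (v (k + e))
      \<in> Zp_span S"
    by (rule Zp_span_add[OF S(2) Zp_span_cmult[OF S(1,2) r torsion]
          Zp_span_cmult[OF S(1,2) Zp_power[OF Zp_of_nat] v(1)]])
  ultimately show "\<exists>v\<in>Zp_span S. w = cmult (of_nat p ^ k) v"
    by auto
qed

text \<open>If s is free over Zp_span S, the s-coefficient of w is divisible by every power
  of p, hence vanishes.\<close>
lemma infinitely_p_divisible_insert_free:
  assumes S: "finite S" "S \<subseteq> carrier M" "s \<in> carrier M" "s \<notin> S"
    and free: "\<And>r. r \<in> Zp p \<Longrightarrow> cmult r s \<in> Zp_span S \<Longrightarrow> r = 0"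
    and "infinitely_p_divisible (insert s S) w"
  shows "infinitely_p_divisible S w"
proof -
  obtain r v where rv: "\<And>k. r k \<in> Zp p" "\<And>k. v k \<in> Zp_span S"
    and w: "\<And>k. w = cmult (of_nat p ^ k) (cmult (r k) s \<oplus>\<^bsub>M\<^esub> v k)"
    using infinitely_p_divisible_insertE[OF S assms(6)] by metis
  have v_carrier: "v k \<in> carrier M" for k
    using rv(2) S Zp_span_closed by blast
  have w_split: "w = cmult (of_nat p ^ k * r k) s \<oplus>\<^bsub>M\<^esub> cmult (of_nat p ^ k) (v k)" for k
    using w[of k] rv(1) v_carrier S(3) by (simp add: cmult_add_right cmult_cmult)
  have coeff_eq: "r 0 = of_nat p ^ k * r k" for k
  proof -
    have eq: "cmult (r 0) s \<oplus>\<^bsub>M\<^esub> v 0 =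
        cmult (of_nat p ^ k * r k) s \<oplus>\<^bsub>M\<^esub> cmult (of_nat p ^ k) (v k)"
      using w_split[of 0] w_split[of k] v_carrier by simp
    have "cmult (r 0 - of_nat p ^ k * r k) s \<in> Zp_span S"
      by (rule cmult_diff_in_Zp_span[OF S(1-3) rv(1) _ rv(2) Zp_span_cmult[OF S(1,2) _ rv(2)] eq])
        (intro Zp_mult Zp_power Zp_of_nat rv(1))+
    moreover have "r 0 - of_nat p ^ k * r k \<in> Zp p"
      by (intro Zp_diff Zp_mult Zp_power Zp_of_nat rv(1))
    ultimately show ?thesis
      using free by fastforce
  qed
  then have "r 0 = 0"
    using rv(1) by (intro Zp_eq_0_if_p_power_divisible) auto
  then have "r k = 0" for k
    using coeff_eq[of k] p_pos by simp
  then have "w = cmult (of_nat p ^ k) (v k)" for k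
    using w_split[of k] v_carrier S(3) by simp
  then show ?thesis
    unfolding infinitely_p_divisible_def using rv(2) by blast
qed

lemma infinitely_p_divisible_eq_zero:
  assumes "finite S" "S \<subseteq> carrier M" "infinitely_p_divisible S w"
  shows "w = \<zero>\<^bsub>M\<^esub>"
  using assms
proof (induction S arbitrary: w rule: finite_induct)
  case empty
  then obtain v where "v \<in> Zp_span {}" "w = cmult (of_nat p ^ 0) v"
    unfolding infinitely_p_divisible_def by blast
  then show ?case
    by (simp add: Zp_span_empty)
next
  case (insert s S)
  have S: "finite S" "S \<subseteq> carrier M" "s \<in> carrier M" "s \<notin> S"
    using insert by auto
  show ?case
  proof (cases "\<exists>r\<in>Zp p. r \<noteq> 0 \<and> cmult r s \<in> Zp_span S")
    case True
    then obtain r where r: "r \<in> Zp p" "r \<noteq> 0" "cmult r s \<in> Zp_span S"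
      by blast
    obtain e u where u: "u \<in> Zp p" "1 / u \<in> Zp p" "r = of_nat p ^ e * u"
      using r(1,2) by (rule Zp_eq_p_power_times_unit)
    then have "cmult (of_nat p ^ e) s = cmult (1 / u) (cmult r s)"
      using r S(3) by (auto simp: cmult_cmult)
    also have "\<dots> \<in> Zp_span S"
      by (rule Zp_span_cmult[OF S(1,2) u(2) r(3)])
    finally show ?thesis
      using insert.IH[OF S(2)] infinitely_p_divisible_insert_torsion[OF S] insert.prems(2) by blast
  next
    case False
    then show ?thesis
      using insert.IH[OF S(2)] infinitely_p_divisible_insert_free[OF S] insert.prems(2) by blast
  qed
qed

lemma Afilt_smult_eq_p_multiple:
  assumes "x \<in> carrier M" "Phi n \<odot>\<^bsub>M\<^esub> x = \<zero>\<^bsub>M\<^esub>" "a \<in> Afilt p n"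
  obtains c where "c \<in> Afilt p n" "a \<odot>\<^bsub>M\<^esub> x = cmult (of_nat p) (c \<odot>\<^bsub>M\<^esub> x)"
proof -
  obtain b c where b: "b \<in> carrier (Aring p q)" and c: "c \<in> Afilt p n"
    and a: "a = Phi n \<otimes>\<^bsub>Aring p q\<^esub> b \<oplus>\<^bsub>Aring p q\<^esub> Aconst (of_nat p) \<otimes>\<^bsub>Aring p q\<^esub> c"
    using Afilt_decompose[OF assms(3)] by blast
  have c_carrier: "c \<in> carrier (Aring p q)"
    using c Afilt_subset_carrier by blast
  have "Phi n \<otimes>\<^bsub>Aring p q\<^esub> b = b \<otimes>\<^bsub>Aring p q\<^esub> Phi n"
    using b by (intro m_comm) auto
  then have "(Phi n \<otimes>\<^bsub>Aring p q\<^esub> b) \<odot>\<^bsub>M\<^esub> x = b \<odot>\<^bsub>M\<^esub> (Phi n \<odot>\<^bsub>M\<^esub> x)"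
    using smult_assoc1[OF b Phi_in_carrier assms(1)] by simp
  also have "\<dots> = \<zero>\<^bsub>M\<^esub>"
    using b assms(2) by simp
  moreover have "a \<odot>\<^bsub>M\<^esub> x =
      (Phi n \<otimes>\<^bsub>Aring p q\<^esub> b) \<odot>\<^bsub>M\<^esub> x \<oplus>\<^bsub>M\<^esub> (Aconst (of_nat p) \<otimes>\<^bsub>Aring p q\<^esub> c) \<odot>\<^bsub>M\<^esub> x"
    unfolding a using b c_carrier assms(1) by (intro smult_l_distr m_closed) auto
  ultimately have "a \<odot>\<^bsub>M\<^esub> x = (Aconst (of_nat p) \<otimes>\<^bsub>Aring p q\<^esub> c) \<odot>\<^bsub>M\<^esub> x"
    using c_carrier assms(1) by (simp add: m_closed)
  also have "\<dots> = cmult (of_nat p) (c \<odot>\<^bsub>M\<^esub> x)"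
    using c_carrier assms(1) by (simp add: cmult_def smult_assoc1)
  finally show thesis
    using that c by blast
qed

lemma Afilt_smult_p_power_divisible:
  assumes "x \<in> carrier M" "Phi n \<odot>\<^bsub>M\<^esub> x = \<zero>\<^bsub>M\<^esub>" "a \<in> Afilt p n"
  shows "\<exists>c\<in>Afilt p n. a \<odot>\<^bsub>M\<^esub> x = cmult (of_nat p ^ k) (c \<odot>\<^bsub>M\<^esub> x)"
  using assms(3)
proof (induction k arbitrary: a)
  case 0
  then have "a \<odot>\<^bsub>M\<^esub> x \<in> carrier M"
    using assms(1) Afilt_subset_carrier by blast
  with 0 show ?case
    by (intro bexI[of _ a]) simp_all
next
  case (Suc k)
  obtain c where c: "c \<in> Afilt p n" "a \<odot>\<^bsub>M\<^esub> x = cmult (of_nat p) (c \<odot>\<^bsub>M\<^esub> x)"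
    using Afilt_smult_eq_p_multiple[OF assms(1,2) Suc.prems] by blast
  obtain c' where c': "c' \<in> Afilt p n" "c \<odot>\<^bsub>M\<^esub> x = cmult (of_nat p ^ k) (c' \<odot>\<^bsub>M\<^esub> x)"
    using Suc.IH[OF c(1)] by blast
  have "c' \<odot>\<^bsub>M\<^esub> x \<in> carrier M"
    using c'(1) Afilt_subset_carrier assms(1) by blast
  then have "a \<odot>\<^bsub>M\<^esub> x = cmult (of_nat p ^ Suc k) (c' \<odot>\<^bsub>M\<^esub> x)"
    using c(2) c'(2) by (simp add: cmult_cmult)
  with c'(1) show ?case
    by blast
qed

lemma Afilt_annihilates:
  assumes "finite S" "S \<subseteq> carrier M" "{a \<odot>\<^bsub>M\<^esub> x | a. a \<in> carrier (Aring p q)} = Zp_span S"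
    and "x \<in> carrier M" "Phi n \<odot>\<^bsub>M\<^esub> x = \<zero>\<^bsub>M\<^esub>" "a \<in> Afilt p n"
  shows "a \<odot>\<^bsub>M\<^esub> x = \<zero>\<^bsub>M\<^esub>"
proof (rule infinitely_p_divisible_eq_zero[OF assms(1,2)])
  show "infinitely_p_divisible S (a \<odot>\<^bsub>M\<^esub> x)"
    unfolding infinitely_p_divisible_def
    using Afilt_smult_p_power_divisible[OF assms(4-6)] assms(3) Afilt_subset_carrier by blast
qed

end

lemma residue_primroot_prime_square_not_dvd:
  assumes "Factorial_Ring.prime p" "residue_primroot (p ^ 2) q"
  shows "\<not> p dvd q"
proof
  assume "p dvd q"
  moreover have "coprime p q"
    using assms(2) by (simp add: residue_primroot_def)
  ultimately have "is_unit p"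
    using coprime_common_divisor[of p q p] by simp
  then show False
    using assms(1) not_prime_unit by blast
qed

theorem corollary3p4:
  fixes p q :: nat and M :: "(nat \<Rightarrow> rat, 'b) module" and x :: 'b and n :: nat
  assumes "Factorial_Ring.prime p" and "odd p"
    and "residue_primroot (p ^ 2) q"
    and "module (Aring p q) M"
    and "locally_fg p M"
    and "x \<in> carrier M"
    and "Phi n \<odot>\<^bsub>M\<^esub> x = \<zero>\<^bsub>M\<^esub>"
  shows "\<forall>a\<in>Afilt p n. a \<odot>\<^bsub>M\<^esub> x = \<zero>\<^bsub>M\<^esub>"
proof -
  interpret A_module p q M
    using assms(1,3,4) residue_primroot_prime_square_not_dvd
    by (simp add: A_module_def A_module_axioms_def p_local_q_def p_local_q_axioms_def p_local_def)
  obtain S where S: "finite S" "S \<subseteq> carrier M"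
    and "{a \<odot>\<^bsub>M\<^esub> x | a. a \<in> {a. \<forall>n. a n \<in> Zp p}} =
      {finsum M (\<lambda>s. Aconst (c s) \<odot>\<^bsub>M\<^esub> s) S | c. \<forall>s\<in>S. c s \<in> Zp p}"
    using bspec[OF assms(5)[unfolded locally_fg_def] assms(6)] by (elim exE conjE)
  then have "{a \<odot>\<^bsub>M\<^esub> x | a. a \<in> carrier (Aring p q)} = Zp_span S"
    by (simp only: Aring_simps Zp_span_def cmult_def)
  then show ?thesis
    using Afilt_annihilates[OF S _ assms(6,7)] by blast
qed

end
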